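(* Let $G$ be a finite simple graph, $\mathbb{K}$ a field, $d$ a nonnegative integer, and let $z$ be a $d$-cycle of $\mathrm{cl}(G)$ (over $\mathbb{K}$) which is $d$-minimal for $G$. Let $v\in z_0$. Then the $(d-1)$-cycle $\mathrm{lk}_z(v)$ is homologically nontrivial in $\mathrm{cl}(G[N_z(v)])$.
   Context: $\mathrm{cl}(G)$ is the clique complex of $G$. A $d$-cycle $z=\sum_\sigma a_\sigma\sigma$ of $\mathrm{cl}(G)$ is a nontrivial homology $d$-cycle if it is not a boundary; its vertex support $z_0$ is the set of vertices lying in some $d$-face $\sigma$ with $a_\sigma\neq0$. A nontrivial homology $d$-cycle $z$ is $d$-minimal for $G$ if no proper subset of $z_0$ is the vertex support of a nontrivial homology $d$-cycle of $\mathrm{cl}(G)$. For $v\in z_0$, $N_z(v)=N_G(v)\cap z_0$ (with $N_G(v)$ the set of neighbors of $v$), $G[A]$ is the induced subgraph on $A$, and $\mathrm{lk}_z(v)$ is the $(d-1)$-chain obtained from $z$ by the link map, i.e. the chain $\sum_{\sigma\ni v}\pm a_\sigma(\sigma\setminus\{v\})$ (with the sign making $\partial$ of the star part of $z$ compatible), which is a $(d-1)$-cycle supported in $\mathrm{cl}(G[N_z(v)])$. *)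

theory Defs
  imports Main
begin

text \<open>Simplices of a clique complex are finite cliques, represented as sets; the empty
 set is the unique (-1)-simplex (reduced/augmented chain complex). A simplex
 with n+1 vertices is a d-simplex with d = n; we index chain groups by the
 cardinality of simplices. Orientation: each simplex is oriented by the linear
 order of the vertex type.\<close>

definition simple_graph :: "'a set \<Rightarrow> ('a \<Rightarrow> 'a \<Rightarrow> bool) \<Rightarrow> bool" where
  "simple_graph V E \<longleftrightarrow> finite V \<and> (\<forall>x y. E x y \<longrightarrow> E y x) \<and> (\<forall>x. \<not> E x x)
     \<and> (\<forall>x y. E x y \<longrightarrow> x \<in> V \<and> y \<in> V)"

definition cl_faces :: "'a set \<Rightarrow> ('a \<Rightarrow> 'a \<Rightarrow> bool) \<Rightarrow> nat \<Rightarrow> 'a set set" where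
  "cl_faces A E n = {\<sigma>. finite \<sigma> \<and> \<sigma> \<subseteq> A \<and> card \<sigma> = n \<and> (\<forall>x\<in>\<sigma>. \<forall>y\<in>\<sigma>. x \<noteq> y \<longrightarrow> E x y)}"

definition cl_chain :: "'a set \<Rightarrow> ('a \<Rightarrow> 'a \<Rightarrow> bool) \<Rightarrow> nat \<Rightarrow> ('a set \<Rightarrow> 'k::field) \<Rightarrow> bool" where
  "cl_chain A E n c \<longleftrightarrow> (\<forall>\<sigma>. c \<sigma> \<noteq> 0 \<longrightarrow> \<sigma> \<in> cl_faces A E n)"

text \<open>Simplicial boundary: the face obtained by deleting the i-th vertex (0-based, in
 increasing order) has sign (-1)^i.\<close>
definition cl_bd :: "'a::linorder set \<Rightarrow> ('a set \<Rightarrow> 'k::field) \<Rightarrow> ('a set \<Rightarrow> 'k)" where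
  "cl_bd A c = (\<lambda>\<tau>. \<Sum>w\<in>A - \<tau>. (-1) ^ card {u\<in>\<tau>. u < w} * c (insert w \<tau>))"

definition cl_cycle :: "'a::linorder set \<Rightarrow> ('a \<Rightarrow> 'a \<Rightarrow> bool) \<Rightarrow> nat \<Rightarrow> ('a set \<Rightarrow> 'k::field) \<Rightarrow> bool" where
  "cl_cycle A E n c \<longleftrightarrow> cl_chain A E n c \<and> cl_bd A c = (\<lambda>_. 0)"

definition cl_boundary :: "'a::linorder set \<Rightarrow> ('a \<Rightarrow> 'a \<Rightarrow> bool) \<Rightarrow> nat \<Rightarrow> ('a set \<Rightarrow> 'k::field) \<Rightarrow> bool" where
  "cl_boundary A E n c \<longleftrightarrow> (\<exists>b. cl_chain A E (Suc n) b \<and> cl_bd A b = c)"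

definition nontrivial_cycle :: "'a::linorder set \<Rightarrow> ('a \<Rightarrow> 'a \<Rightarrow> bool) \<Rightarrow> nat \<Rightarrow> ('a set \<Rightarrow> 'k::field) \<Rightarrow> bool" where
  "nontrivial_cycle A E n c \<longleftrightarrow> cl_cycle A E n c \<and> \<not> cl_boundary A E n c"

definition vsupp :: "('a set \<Rightarrow> 'k::zero) \<Rightarrow> 'a set" where
  "vsupp z = \<Union>{\<sigma>. z \<sigma> \<noteq> 0}"

definition d_minimal :: "'a::linorder set \<Rightarrow> ('a \<Rightarrow> 'a \<Rightarrow> bool) \<Rightarrow> nat \<Rightarrow> ('a set \<Rightarrow> 'k::field) \<Rightarrow> bool" where
  "d_minimal V E d z \<longleftrightarrow> nontrivial_cycle V E (Suc d) z \<and>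
     (\<forall>z' :: 'a set \<Rightarrow> 'k. nontrivial_cycle V E (Suc d) z' \<longrightarrow> \<not> (vsupp z' \<subset> vsupp z))"

definition Nz :: "('a \<Rightarrow> 'a \<Rightarrow> bool) \<Rightarrow> ('a set \<Rightarrow> 'k::zero) \<Rightarrow> 'a \<Rightarrow> 'a set" where
  "Nz E z v = {u \<in> vsupp z. E v u}"

definition lk :: "('a set \<Rightarrow> 'k::field) \<Rightarrow> 'a::linorder \<Rightarrow> ('a set \<Rightarrow> 'k)" where
  "lk z v = (\<lambda>\<tau>. if v \<in> \<tau> then 0 else (-1) ^ card {u\<in>\<tau>. u < v} * z (insert v \<tau>))"

end

theory Submission
  imports Defs
begin

text \<open>Suppose \<open>lk\<^sub>z(v) = \<partial>b\<close> for a chain \<open>b\<close> of \<open>cl(G[N\<^sub>z(v)])\<close>. Every vertex of \<open>N\<^sub>z(v)\<close> is adjacent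
  to \<open>v\<close>, so the cone \<open>v * b\<close> is a chain of \<open>cl(G)\<close>, and \<open>\<partial>(v * b) = b - v * \<partial>b = b - v * lk\<^sub>z(v)\<close>.
  Since \<open>v * lk\<^sub>z(v)\<close> is the part of \<open>z\<close> on simplices through \<open>v\<close>, the homologous cycle
  \<open>z + \<partial>(v * b)\<close> avoids \<open>v\<close> and is supported in \<open>z\<^sub>0\<close>: a nontrivial cycle on a proper subset
  of \<open>z\<^sub>0\<close>, contradicting minimality.\<close>

definition ins_sign :: "'a::linorder set \<Rightarrow> 'a \<Rightarrow> 'k::field" where
  "ins_sign \<tau> w = (-1) ^ card {u\<in>\<tau>. u < w}"

lemma ins_sign_insert:
  assumes "finite \<tau>" "w \<notin> \<tau>"
  shows "(ins_sign (insert w \<tau>) x :: 'k::field) = (if w < x then - ins_sign \<tau> x else ins_sign \<tau> x)"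
proof -
  have "{u\<in>insert w \<tau>. u < x} = (if w < x then insert w {u\<in>\<tau>. u < x} else {u\<in>\<tau>. u < x})"
    by auto
  then show ?thesis
    using assms by (simp add: ins_sign_def)
qed

lemma ins_sign_mult_self [simp]: "(ins_sign \<tau> w :: 'k::field) * ins_sign \<tau> w = 1"
  by (simp add: ins_sign_def power_mult_distrib[symmetric])

lemma cl_bd_ins_sign: "cl_bd A c = (\<lambda>\<tau>. \<Sum>w\<in>A - \<tau>. ins_sign \<tau> w * c (insert w \<tau>))"
  by (simp add: cl_bd_def ins_sign_def)

lemma lk_ins_sign: "lk c v = (\<lambda>\<tau>. if v \<in> \<tau> then 0 else ins_sign \<tau> v * c (insert v \<tau>))"
  unfolding lk_def ins_sign_def ..

lemma cl_bd_add: "cl_bd A (\<lambda>\<sigma>. f \<sigma> + g \<sigma>) \<tau> = cl_bd A f \<tau> + cl_bd A g \<tau>"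
  by (simp add: cl_bd_def sum.distrib distrib_left)

lemma cl_bd_diff: "cl_bd A (\<lambda>\<sigma>. f \<sigma> - g \<sigma>) \<tau> = cl_bd A f \<tau> - cl_bd A g \<tau>"
  by (simp add: cl_bd_def sum_subtractf right_diff_distrib)

lemma cl_bd_superset_eq:
  assumes "finite B" "A \<subseteq> B" "\<And>w. w \<in> B - A \<Longrightarrow> w \<notin> \<tau> \<Longrightarrow> c (insert w \<tau>) = 0"
  shows "cl_bd B c \<tau> = cl_bd A c \<tau>"
  unfolding cl_bd_def using assms by (intro sum.mono_neutral_right) auto

lemma sum_sum_diff_antisym_eq_0:
  fixes f :: "'a \<Rightarrow> 'a \<Rightarrow> 'b::ab_group_add"
  assumes "finite B" "\<And>w x. w \<noteq> x \<Longrightarrow> f x w = - f w x"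
  shows "(\<Sum>w\<in>B. \<Sum>x\<in>B - {w}. f w x) = 0"
  using assms(1)
proof (induction B rule: finite_induct)
  case empty
  then show ?case by simp
next
  case (insert a B)
  have "(\<Sum>x\<in>insert a B - {w}. f w x) = f w a + (\<Sum>x\<in>B - {w}. f w x)" if "w \<in> B" for w
  proof -
    have "insert a B - {w} = insert a (B - {w})"
      using that insert by auto
    then show ?thesis
      using insert by simp
  qed
  then have "(\<Sum>w\<in>insert a B. \<Sum>x\<in>insert a B - {w}. f w x)
      = (\<Sum>x\<in>B. f a x) + (\<Sum>w\<in>B. f w a) + (\<Sum>w\<in>B. \<Sum>x\<in>B - {w}. f w x)"
    using insert by (simp add: insert_Diff_if sum.distrib)
  also have "(\<Sum>w\<in>B. f w a) = (\<Sum>x\<in>B. - f a x)"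
    using insert.hyps(2) by (intro sum.cong refl) (metis assms(2))
  finally show ?case
    using insert.IH by (simp add: sum_negf)
qed

lemma cl_bd_cl_bd:
  fixes c :: "'a::linorder set \<Rightarrow> 'k::field"
  assumes "finite A" "\<And>\<sigma>. c \<sigma> \<noteq> 0 \<Longrightarrow> finite \<sigma>"
  shows "cl_bd A (cl_bd A c) = (\<lambda>_. 0)"
proof
  fix \<tau>
  show "cl_bd A (cl_bd A c) \<tau> = 0"
  proof (cases "finite \<tau>")
    case False
    then have "c (insert x (insert w \<tau>)) = 0" for x w
      using assms(2) by fastforce
    then show ?thesis
      by (simp add: cl_bd_def)
  next
    case True
    define f where "f w x = ins_sign \<tau> w * ins_sign \<tau> x * (if w < x then -1 else 1)
      * c (insert x (insert w \<tau>))" for w x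
    have "cl_bd A (cl_bd A c) \<tau> = (\<Sum>w\<in>A - \<tau>. \<Sum>x\<in>(A - \<tau>) - {w}. f w x)"
    proof (unfold cl_bd_ins_sign, intro sum.cong refl)
      fix w
      assume w: "w \<in> A - \<tau>"
      have "A - insert w \<tau> = (A - \<tau>) - {w}"
        by auto
      moreover have "ins_sign (insert w \<tau>) x * c (insert x (insert w \<tau>))
          = ins_sign \<tau> x * ((if w < x then -1 else 1) * c (insert x (insert w \<tau>)))" for x
        using w True by (simp add: ins_sign_insert)
      ultimately have "(\<Sum>x\<in>A - insert w \<tau>. ins_sign (insert w \<tau>) x * c (insert x (insert w \<tau>)))
          = (\<Sum>x\<in>(A - \<tau>) - {w}. ins_sign \<tau> x * ((if w < x then -1 else 1) * c (insert x (insert w \<tau>))))"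
        by (metis (no_types, lifting) sum.cong)
      then show "ins_sign \<tau> w * (\<Sum>x\<in>A - insert w \<tau>. ins_sign (insert w \<tau>) x * c (insert x (insert w \<tau>)))
          = (\<Sum>x\<in>(A - \<tau>) - {w}. f w x)"
        by (simp add: sum_distrib_left f_def mult.assoc del: mult_minus_left mult_1)
    qed
    also have "\<dots> = 0"
    proof (rule sum_sum_diff_antisym_eq_0)
      show "finite (A - \<tau>)"
        using assms by simp
      show "f x w = - f w x" if "w \<noteq> x" for w x
        using that by (cases "w < x") (auto simp: f_def insert_commute)
    qed
    finally show ?thesis .
  qed
qed

lemma cl_chain_mono: "cl_chain A E n c \<Longrightarrow> A \<subseteq> B \<Longrightarrow> cl_chain B E n c"
  unfolding cl_chain_def cl_faces_def by blast

lemma cl_chain_finite: "cl_chain A E n c \<Longrightarrow> c \<sigma> \<noteq> 0 \<Longrightarrow> finite \<sigma>"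
  by (auto simp: cl_chain_def cl_faces_def)

lemma cl_chain_vsupp_subset: "cl_chain A E n c \<Longrightarrow> vsupp c \<subseteq> A"
  by (auto simp: cl_chain_def cl_faces_def vsupp_def)

lemma vsupp_delete_vertex_add_subset:
  fixes z b :: "'a set \<Rightarrow> 'b::monoid_add"
  shows "vsupp (\<lambda>\<tau>. if v \<in> \<tau> then 0 else z \<tau> + b \<tau>) \<subseteq> (vsupp z \<union> vsupp b) - {v}"
proof
  fix u
  assume "u \<in> vsupp (\<lambda>\<tau>. if v \<in> \<tau> then 0 else z \<tau> + b \<tau>)"
  then obtain \<tau> where "u \<in> \<tau>" "v \<notin> \<tau>" "z \<tau> + b \<tau> \<noteq> 0"
    by (auto simp: vsupp_def split: if_splits)
  moreover from this have "z \<tau> \<noteq> 0 \<or> b \<tau> \<noteq> 0"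
    by auto
  ultimately show "u \<in> (vsupp z \<union> vsupp b) - {v}"
    by (auto simp: vsupp_def)
qed

lemma cl_chain_cl_bd:
  assumes "cl_chain A E (Suc n) c"
  shows "cl_chain A E n (cl_bd A c)"
  unfolding cl_chain_def
proof (intro allI impI)
  fix \<tau>
  assume "cl_bd A c \<tau> \<noteq> 0"
  then obtain w where w: "w \<in> A - \<tau>" "c (insert w \<tau>) \<noteq> 0"
    unfolding cl_bd_def by (metis (no_types, lifting) mult_zero_right sum.neutral)
  then have "insert w \<tau> \<in> cl_faces A E (Suc n)"
    using assms by (auto simp: cl_chain_def)
  then show "\<tau> \<in> cl_faces A E n"
    using w(1) by (auto simp: cl_faces_def)
qed

lemma cl_chain_lk:
  assumes "cl_chain A E (Suc n) c"
  shows "cl_chain (Nz E c v) E n (lk c v)"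
  unfolding cl_chain_def
proof (intro allI impI)
  fix \<tau>
  assume "lk c v \<tau> \<noteq> 0"
  then have v: "v \<notin> \<tau>" and nz: "c (insert v \<tau>) \<noteq> 0"
    by (auto simp: lk_ins_sign split: if_splits)
  then have "insert v \<tau> \<in> cl_faces A E (Suc n)"
    using assms by (auto simp: cl_chain_def)
  moreover have "\<tau> \<subseteq> vsupp c"
    using nz by (auto simp: vsupp_def)
  ultimately show "\<tau> \<in> cl_faces (Nz E c v) E n"
    using v by (auto simp: cl_faces_def Nz_def)
qed

lemma cl_bd_lk:
  fixes c :: "'a::linorder set \<Rightarrow> 'k::field"
  assumes "v \<notin> A" "\<And>\<sigma>. c \<sigma> \<noteq> 0 \<Longrightarrow> finite \<sigma>"
  shows "cl_bd A (lk c v) = (\<lambda>\<sigma>. - lk (cl_bd A c) v \<sigma>)"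
proof
  fix \<sigma>
  show "cl_bd A (lk c v) \<sigma> = - lk (cl_bd A c) v \<sigma>"
  proof (cases "v \<notin> \<sigma> \<and> finite \<sigma>")
    case False
    then have "c (insert v (insert w \<sigma>)) = 0" if "v \<notin> \<sigma>" for w
      using that assms(2) by fastforce
    then show ?thesis
      by (auto simp: cl_bd_ins_sign lk_ins_sign insert_commute intro!: sum.neutral)
  next
    case True
    have "cl_bd A (lk c v) \<sigma>
        = (\<Sum>w\<in>A - \<sigma>. ins_sign \<sigma> w * (ins_sign (insert w \<sigma>) v * c (insert v (insert w \<sigma>))))"
      using assms(1) True by (auto simp: cl_bd_ins_sign lk_ins_sign intro: sum.cong)
    also have "\<dots> = (\<Sum>w\<in>A - insert v \<sigma>. - ins_sign \<sigma> v
        * (ins_sign (insert v \<sigma>) w * c (insert w (insert v \<sigma>))))"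
    proof (intro sum.cong)
      show "A - \<sigma> = A - insert v \<sigma>"
        using assms(1) by auto
      fix w
      assume "w \<in> A - insert v \<sigma>"
      with True have "ins_sign \<sigma> w * ins_sign (insert w \<sigma>) v
          = - (ins_sign \<sigma> v * ins_sign (insert v \<sigma>) w :: 'k)"
        by (cases "w < v") (auto simp: ins_sign_insert)
      then show "ins_sign \<sigma> w * (ins_sign (insert w \<sigma>) v * c (insert v (insert w \<sigma>)))
          = - ins_sign \<sigma> v * (ins_sign (insert v \<sigma>) w * c (insert w (insert v \<sigma>)))"
        by (simp add: insert_commute mult.assoc[symmetric])
    qed
    also have "\<dots> = - lk (cl_bd A c) v \<sigma>"
      using True by (simp add: cl_bd_ins_sign lk_ins_sign sum_distrib_left sum_negf)
    finally show ?thesis .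
  qed
qed

text \<open>The cone \<open>v * b\<close>, with the sign convention of \<open>lk\<close>, so that coning undoes the link.\<close>
definition cone :: "'a::linorder \<Rightarrow> ('a set \<Rightarrow> 'k::field) \<Rightarrow> ('a set \<Rightarrow> 'k)" where
  "cone v b = (\<lambda>\<rho>. if v \<in> \<rho> then ins_sign (\<rho> - {v}) v * b (\<rho> - {v}) else 0)"

lemma cone_lk: "cone v (lk c v) = (\<lambda>\<rho>. if v \<in> \<rho> then c \<rho> else 0)"
  by (auto simp: cone_def lk_ins_sign mult.assoc[symmetric] insert_absorb)

lemma cl_chain_cone:
  assumes "cl_chain A E n b" "v \<notin> A" "\<And>u. u \<in> A \<Longrightarrow> E v u" "\<And>x y. E x y \<Longrightarrow> E y x"
  shows "cl_chain (insert v A) E (Suc n) (cone v b)"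
  unfolding cl_chain_def
proof (intro allI impI)
  fix \<rho>
  assume "cone v b \<rho> \<noteq> 0"
  then have "v \<in> \<rho>" "\<rho> - {v} \<in> cl_faces A E n"
    using assms(1) by (auto simp: cone_def cl_chain_def split: if_splits)
  then obtain \<sigma> where \<sigma>: "\<rho> = insert v \<sigma>" "v \<notin> \<sigma>" "\<sigma> \<in> cl_faces A E n"
    by (metis Diff_iff insert_Diff singletonI)
  then have "u \<in> A" if "u \<in> \<sigma>" for u
    using that by (auto simp: cl_faces_def)
  then have "E v u \<and> E u v" if "u \<in> \<sigma>" for u
    using that by (meson assms(3,4))
  with \<sigma> show "\<rho> \<in> cl_faces (insert v A) E (Suc n)"
    by (auto simp: cl_faces_def)
qed

lemma cl_bd_cone_apex_free:
  assumes "finite B" "v \<in> B" "v \<notin> \<tau>"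
  shows "cl_bd B (cone v b) \<tau> = b \<tau>"
proof -
  have "cl_bd B (cone v b) \<tau> = (\<Sum>w\<in>B - \<tau>. if w = v then b \<tau> else 0)"
    unfolding cl_bd_ins_sign
  proof (intro sum.cong refl)
    fix w
    assume "w \<in> B - \<tau>"
    show "ins_sign \<tau> w * cone v b (insert w \<tau>) = (if w = v then b \<tau> else 0)"
    proof (cases "w = v")
      case True
      have "insert v \<tau> - {v} = \<tau>"
        using assms(3) by auto
      then show ?thesis
        using True by (simp add: cone_def mult.assoc[symmetric])
    qed (use assms(3) in \<open>simp add: cone_def\<close>)
  qed
  also have "\<dots> = b \<tau>"
    using assms by simp
  finally show ?thesis .
qed

lemma cl_bd_cone_through_apex:
  fixes b :: "'a::linorder set \<Rightarrow> 'k::field"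
  assumes "finite B" "\<And>\<sigma>. b \<sigma> \<noteq> 0 \<Longrightarrow> finite \<sigma> \<and> v \<notin> \<sigma>" "v \<notin> \<sigma>"
  shows "cl_bd B (cone v b) (insert v \<sigma>) = - cone v (cl_bd B b) (insert v \<sigma>)"
proof (cases "finite \<sigma>")
  case False
  have b0: "b \<rho> = 0" if "infinite \<rho>" for \<rho>
    using that assms(2) by blast
  have "cone v b \<rho> = 0" if "infinite \<rho>" for \<rho>
    using that b0[of "\<rho> - {v}"] by (simp add: cone_def)
  then have "cl_bd B (cone v b) (insert v \<sigma>) = 0"
    using False by (simp add: cl_bd_def)
  moreover have "cl_bd B b \<sigma> = 0"
    using False b0 by (simp add: cl_bd_def)
  ultimately show ?thesis
    using assms(3) by (simp add: cone_def)
next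
  case True
  have "cl_bd B (cone v b) (insert v \<sigma>)
      = (\<Sum>w\<in>B - insert v \<sigma>. - ins_sign \<sigma> v * (ins_sign \<sigma> w * b (insert w \<sigma>)))"
    unfolding cl_bd_ins_sign
  proof (intro sum.cong refl)
    fix w
    assume w: "w \<in> B - insert v \<sigma>"
    then have "insert w (insert v \<sigma>) - {v} = insert w \<sigma>"
      using assms(3) by auto
    moreover have "ins_sign (insert v \<sigma>) w * ins_sign (insert w \<sigma>) v = - (ins_sign \<sigma> v * ins_sign \<sigma> w :: 'k)"
      using w True assms(3) by (cases "w < v") (auto simp: ins_sign_insert)
    ultimately show "ins_sign (insert v \<sigma>) w * cone v b (insert w (insert v \<sigma>))
        = - ins_sign \<sigma> v * (ins_sign \<sigma> w * b (insert w \<sigma>))"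
      by (simp add: cone_def mult.assoc[symmetric])
  qed
  also have "\<dots> = - ins_sign \<sigma> v * cl_bd B b \<sigma>"
  proof -
    have "b (insert v \<sigma>) = 0"
      using assms(2) by blast
    then have "cl_bd B b \<sigma> = cl_bd (B - {v}) b \<sigma>"
      using assms(1) by (intro cl_bd_superset_eq) auto
    moreover have "B - insert v \<sigma> = (B - {v}) - \<sigma>"
      by auto
    ultimately show ?thesis
      by (simp add: cl_bd_ins_sign sum_distrib_left)
  qed
  also have "\<dots> = - cone v (cl_bd B b) (insert v \<sigma>)"
    using assms(3) by (simp add: cone_def)
  finally show ?thesis .
qed

lemma cl_bd_cone:
  fixes b :: "'a::linorder set \<Rightarrow> 'k::field"
  assumes "finite B" "v \<in> B" "\<And>\<sigma>. b \<sigma> \<noteq> 0 \<Longrightarrow> finite \<sigma> \<and> v \<notin> \<sigma>"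
  shows "cl_bd B (cone v b) = (\<lambda>\<tau>. b \<tau> - cone v (cl_bd B b) \<tau>)"
proof
  fix \<tau>
  show "cl_bd B (cone v b) \<tau> = b \<tau> - cone v (cl_bd B b) \<tau>"
  proof (cases "v \<in> \<tau>")
    case True
    then obtain \<sigma> where "\<tau> = insert v \<sigma>" "v \<notin> \<sigma>"
      by (meson mk_disjoint_insert)
    moreover have "b \<tau> = 0"
      using assms(3) True by auto
    ultimately show ?thesis
      using cl_bd_cone_through_apex[OF assms(1,3)] by simp
  next
    case False
    then show ?thesis
      using cl_bd_cone_apex_free[OF assms(1,2)] by (simp add: cone_def)
  qed
qed

lemma cl_cycle_lk:
  assumes "finite V" "\<not> E v v" "cl_cycle V E (Suc n) c"
  shows "cl_cycle (Nz E c v) E n (lk c v)"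
proof -
  have chain: "cl_chain V E (Suc n) c" and cycle: "cl_bd V c = (\<lambda>_. 0)"
    using assms(3) by (auto simp: cl_cycle_def)
  have NV: "Nz E c v \<subseteq> V"
    using cl_chain_vsupp_subset[OF chain] by (auto simp: Nz_def)
  have "v \<notin> Nz E c v"
    using assms(2) by (simp add: Nz_def)
  then have lk_bd: "cl_bd (Nz E c v) (lk c v) = (\<lambda>\<sigma>. - lk (cl_bd (Nz E c v) c) v \<sigma>)"
    using cl_chain_finite[OF chain] by (rule cl_bd_lk)
  have "cl_bd (Nz E c v) c (insert v \<sigma>) = 0" if "v \<notin> \<sigma>" for \<sigma>
  proof -
    have "cl_bd V c (insert v \<sigma>) = cl_bd (Nz E c v) c (insert v \<sigma>)"
    proof (rule cl_bd_superset_eq[OF assms(1) NV])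
      fix w
      assume w: "w \<in> V - Nz E c v" "w \<notin> insert v \<sigma>"
      show "c (insert w (insert v \<sigma>)) = 0"
      proof (rule ccontr)
        assume nz: "c (insert w (insert v \<sigma>)) \<noteq> 0"
        then have "E v w"
          using chain w by (auto simp: cl_chain_def cl_faces_def)
        moreover have "w \<in> vsupp c"
          using nz by (auto simp: vsupp_def)
        ultimately show False
          using w by (simp add: Nz_def)
      qed
    qed
    then show ?thesis
      using cycle by simp
  qed
  then have "cl_bd (Nz E c v) (lk c v) = (\<lambda>_. 0)"
    unfolding lk_bd by (auto simp: lk_ins_sign fun_eq_iff)
  then show ?thesis
    using cl_chain_lk[OF chain] by (simp add: cl_cycle_def)
qed

lemma nontrivial_cycle_add_cl_bd:
  assumes "finite V" "nontrivial_cycle V E n z" "cl_chain V E (Suc n) c"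
  shows "nontrivial_cycle V E n (\<lambda>\<tau>. z \<tau> + cl_bd V c \<tau>)"
proof -
  have z: "cl_chain V E n z" "cl_bd V z = (\<lambda>_. 0)" "\<not> cl_boundary V E n z"
    using assms(2) by (auto simp: nontrivial_cycle_def cl_cycle_def)
  have "cl_chain V E n (\<lambda>\<tau>. z \<tau> + cl_bd V c \<tau>)"
    using z(1) cl_chain_cl_bd[OF assms(3)] unfolding cl_chain_def by (metis add_0)
  moreover have "cl_bd V (\<lambda>\<tau>. z \<tau> + cl_bd V c \<tau>) = (\<lambda>_. 0)"
  proof
    fix \<tau>
    have "cl_bd V (cl_bd V c) = (\<lambda>_. 0)"
      using assms(1) cl_chain_finite[OF assms(3)] by (rule cl_bd_cl_bd)
    then show "cl_bd V (\<lambda>\<tau>. z \<tau> + cl_bd V c \<tau>) \<tau> = 0"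
      using z(2) by (simp add: cl_bd_add)
  qed
  moreover have "\<not> cl_boundary V E n (\<lambda>\<tau>. z \<tau> + cl_bd V c \<tau>)"
  proof
    assume "cl_boundary V E n (\<lambda>\<tau>. z \<tau> + cl_bd V c \<tau>)"
    then obtain b where b: "cl_chain V E (Suc n) b" "cl_bd V b = (\<lambda>\<tau>. z \<tau> + cl_bd V c \<tau>)"
      by (auto simp: cl_boundary_def)
    have "cl_chain V E (Suc n) (\<lambda>\<rho>. b \<rho> - c \<rho>)"
      using b(1) assms(3) unfolding cl_chain_def by (metis diff_self diff_zero)
    moreover have "cl_bd V (\<lambda>\<rho>. b \<rho> - c \<rho>) = z"
      using b(2) by (intro ext) (simp add: cl_bd_diff)
    ultimately show False
      using z(3) by (auto simp: cl_boundary_def)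
  qed
  ultimately show ?thesis
    by (simp add: nontrivial_cycle_def cl_cycle_def)
qed

lemma add_cl_bd_cone_of_lk_filling:
  fixes z :: "'a::linorder set \<Rightarrow> 'k::field"
  assumes "finite V" "v \<in> V" "N \<subseteq> V" "v \<notin> N" "cl_chain N E n b" "cl_bd N b = lk z v"
  shows "(\<lambda>\<tau>. z \<tau> + cl_bd V (cone v b) \<tau>) = (\<lambda>\<tau>. if v \<in> \<tau> then 0 else z \<tau> + b \<tau>)"
proof -
  have b: "\<sigma> \<subseteq> N \<and> finite \<sigma>" if "b \<sigma> \<noteq> 0" for \<sigma>
    using assms(5) that by (auto simp: cl_chain_def cl_faces_def)
  have "cl_bd V b = cl_bd N b"
  proof
    fix \<tau>
    show "cl_bd V b \<tau> = cl_bd N b \<tau>"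
      by (rule cl_bd_superset_eq[OF assms(1,3)]) (meson DiffD2 b insert_subset)
  qed
  moreover have "cl_bd V (cone v b) = (\<lambda>\<tau>. b \<tau> - cone v (cl_bd V b) \<tau>)"
    using b assms(4) by (intro cl_bd_cone[OF assms(1,2)]) auto
  ultimately have "cl_bd V (cone v b) = (\<lambda>\<tau>. b \<tau> - cone v (lk z v) \<tau>)"
    using assms(6) by simp
  moreover have "b \<tau> = 0" if "v \<in> \<tau>" for \<tau>
    using b assms(4) that by blast
  ultimately show ?thesis
    by (auto simp: cone_lk)
qed

theorem lemma3p2:
  fixes V :: "'a::linorder set" and E :: "'a \<Rightarrow> 'a \<Rightarrow> bool"
    and z :: "'a set \<Rightarrow> 'k::field" and d :: nat and v :: 'a
  assumes "simple_graph V E"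
    and "d_minimal V E d z"
    and "v \<in> vsupp z"
  shows "nontrivial_cycle (Nz E z v) E d (lk z v)"
proof -
  have finite: "finite V" and sym: "\<And>x y. E x y \<Longrightarrow> E y x" and irrefl: "\<not> E v v"
    using assms(1) by (auto simp: simple_graph_def)
  have z: "nontrivial_cycle V E (Suc d) z"
    and minimal: "\<And>z' :: 'a set \<Rightarrow> 'k. nontrivial_cycle V E (Suc d) z' \<Longrightarrow> \<not> vsupp z' \<subset> vsupp z"
    using assms(2) by (auto simp: d_minimal_def)
  then have cycle: "cl_cycle V E (Suc d) z"
    by (simp add: nontrivial_cycle_def)
  then have zV: "vsupp z \<subseteq> V"
    unfolding cl_cycle_def using cl_chain_vsupp_subset by blast
  define N where "N = Nz E z v"
  have N: "N \<subseteq> vsupp z" "v \<notin> N" "\<And>u. u \<in> N \<Longrightarrow> E v u"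
    using irrefl by (auto simp: N_def Nz_def)
  then have "v \<in> V" "N \<subseteq> V"
    using zV assms(3) by auto
  have "\<not> cl_boundary N E d (lk z v)"
  proof
    assume "cl_boundary N E d (lk z v)"
    then obtain b where b: "cl_chain N E (Suc d) b" "cl_bd N b = lk z v"
      by (auto simp: cl_boundary_def)
    define z' where "z' = (\<lambda>\<tau>. if v \<in> \<tau> then 0 else z \<tau> + b \<tau>)"
    have "cl_chain V E (Suc (Suc d)) (cone v b)"
      using cl_chain_cone[OF b(1) N(2,3) sym] \<open>v \<in> V\<close> \<open>N \<subseteq> V\<close> by (simp add: cl_chain_mono)
    then have "nontrivial_cycle V E (Suc d) (\<lambda>\<tau>. z \<tau> + cl_bd V (cone v b) \<tau>)"
      by (rule nontrivial_cycle_add_cl_bd[OF finite z])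
    then have nontrivial: "nontrivial_cycle V E (Suc d) z'"
      unfolding z'_def add_cl_bd_cone_of_lk_filling[OF finite \<open>v \<in> V\<close> \<open>N \<subseteq> V\<close> N(2) b] .
    have "vsupp z' \<subseteq> (vsupp z \<union> vsupp b) - {v}"
      unfolding z'_def by (rule vsupp_delete_vertex_add_subset)
    moreover have "vsupp b \<subseteq> vsupp z"
      using cl_chain_vsupp_subset[OF b(1)] N(1) by (rule order_trans)
    ultimately have "vsupp z' \<subset> vsupp z"
      using assms(3) by blast
    then show False
      using minimal[OF nontrivial] by contradiction
  qed
  then show ?thesis
    using cl_cycle_lk[OF finite irrefl cycle] by (simp add: nontrivial_cycle_def N_def)
qed

end
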